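(* Let $n\ge1$, $p\in\,]1,2[$ and $k_3>0$. Define $\phi_1,\phi_2:\mathbb{R}^n\to\mathbb{R}^n$ by $$\phi_1(e_1)=k_3e_1+(e_1^\top e_1)^{\frac{1-p}{3p-2}}e_1,$$ $$\phi_2(e_1)=k_3^2e_1+\frac{2k_3(2p-1)}{3p-2}(e_1^\top e_1)^{\frac{1-p}{3p-2}}e_1+\frac{p}{3p-2}(e_1^\top e_1)^{\frac{2(1-p)}{3p-2}}e_1$$ (with $\phi_1(0)=\phi_2(0)=0$). Let $k_1,k_2>0$ be such that the matrix $\mathcal{A}^*=\begin{bmatrix}-k_1&1\\-k_2&0\end{bmatrix}$ is Hurwitz. Then for the system $$\dot e_1=-k_1\phi_1(e_1)+e_2,\qquad \dot e_2=-k_2\phi_2(e_1),$$ with $(e_1,e_2)\in\mathbb{R}^n\times\mathbb{R}^n$, the state $(e_1^\top,e_2^\top)\in\mathbb{R}^{2n}$ converges to the origin in a fast finite-time stable manner, i.e. the origin is fast finite-time stable.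
   Context: An equilibrium (taken at the origin) of an ODE $\dot x=f(x)$ is finite-time stable if it is Lyapunov stable and every solution starting in a neighbourhood of it reaches it in finite time (settling time) and stays there. It is called fast finite-time stable (FFTS) if, in addition, convergence is governed by a positive definite function $V$ with $\dot V\le-\lambda_1V-\lambda_2V^{\alpha}$ for constants $\lambda_1,\lambda_2>0$, $\alpha\in\,]0,1[$, so that the settling time satisfies $T\le\frac{1}{\lambda_1(1-\alpha)}\ln\frac{\lambda_1V^{1-\alpha}(x_0)+\lambda_2}{\lambda_2}$. *)

theory Defs
  imports "HOL-Analysis.Analysis"
begin

definition is_solution :: "('a::real_normed_vector \<Rightarrow> 'a) \<Rightarrow> (real \<Rightarrow> 'a) \<Rightarrow> bool" where
  "is_solution f x \<longleftrightarrow> (\<forall>t\<ge>0. (x has_vector_derivative f (x t)) (at t within {0..}))"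

definition lyapunov_stable :: "('a::real_normed_vector \<Rightarrow> 'a) \<Rightarrow> bool" where
  "lyapunov_stable f \<longleftrightarrow>
     (\<forall>\<epsilon>>0. \<exists>\<delta>>0. \<forall>x. is_solution f x \<and> norm (x 0) < \<delta> \<longrightarrow> (\<forall>t\<ge>0. norm (x t) < \<epsilon>))"

definition ffts :: "('a::real_normed_vector \<Rightarrow> 'a) \<Rightarrow> bool" where
  "ffts f \<longleftrightarrow> f 0 = 0 \<and> lyapunov_stable f \<and>
    (\<exists>r>0. \<exists>V l1 l2 \<alpha>. l1 > 0 \<and> l2 > 0 \<and> 0 < \<alpha> \<and> \<alpha> < 1 \<and>
       continuous_on (ball 0 r) V \<and> V 0 = (0::real) \<and> (\<forall>z\<in>ball 0 r. z \<noteq> 0 \<longrightarrow> V z > 0) \<and>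
       (\<forall>x. is_solution f x \<and> x 0 \<in> ball 0 r \<longrightarrow>
          (\<forall>t\<ge>0. \<forall>\<epsilon>>0. eventually
              (\<lambda>h. (V (x (t + h)) - V (x t)) / h \<le> - l1 * V (x t) - l2 * V (x t) powr \<alpha> + \<epsilon>)
              (at_right 0)) \<and>
          (\<exists>T\<ge>0. T \<le> 1 / (l1 * (1 - \<alpha>)) * ln ((l1 * V (x 0) powr (1 - \<alpha>) + l2) / l2) \<and>
                 (\<forall>t\<ge>T. x t = 0))))"

definition hurwitz :: "real^'n^'n \<Rightarrow> bool" where
  "hurwitz A \<longleftrightarrow> (\<forall>(\<mu>::complex) v. v \<noteq> 0 \<and> (\<chi> i j. complex_of_real (A $ i $ j)) *v v = \<mu> *s v
                     \<longrightarrow> Re \<mu> < 0)"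

definition phi1 :: "real \<Rightarrow> real \<Rightarrow> real^'n \<Rightarrow> real^'n" where
  "phi1 p k3 e = (if e = 0 then 0 else
     k3 *\<^sub>R e + ((e \<bullet> e) powr ((1 - p) / (3 * p - 2))) *\<^sub>R e)"

definition phi2 :: "real \<Rightarrow> real \<Rightarrow> real^'n \<Rightarrow> real^'n" where
  "phi2 p k3 e = (if e = 0 then 0 else
     k3\<^sup>2 *\<^sub>R e + (2 * k3 * (2 * p - 1) / (3 * p - 2) * (e \<bullet> e) powr ((1 - p) / (3 * p - 2))) *\<^sub>R e
     + (p / (3 * p - 2) * (e \<bullet> e) powr (2 * (1 - p) / (3 * p - 2))) *\<^sub>R e)"

definition err_sys :: "real \<Rightarrow> real \<Rightarrow> real \<Rightarrow> real \<Rightarrow> (real^'n) \<times> (real^'n) \<Rightarrow> (real^'n) \<times> (real^'n)" where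
  "err_sys p k1 k2 k3 = (\<lambda>(e1, e2). (- k1 *\<^sub>R phi1 p k3 e1 + e2, - k2 *\<^sub>R phi2 p k3 e1))"

end

theory Submission
  imports Defs
begin

text \<open>
  The Lyapunov function is the quadratic form
  \<open>V = c1 \<phi>\<^sub>1 e\<^sub>1 \<bullet> \<phi>\<^sub>1 e\<^sub>1 - 2 \<phi>\<^sub>1 e\<^sub>1 \<bullet> e\<^sub>2 + c2 e\<^sub>2 \<bullet> e\<^sub>2\<close>, comparable to
  \<open>\<phi>\<^sub>1 e\<^sub>1 \<bullet> \<phi>\<^sub>1 e\<^sub>1 + e\<^sub>2 \<bullet> e\<^sub>2\<close>. Where \<open>e\<^sub>1 \<noteq> 0\<close> it is differentiable along solutions,
  and since \<open>phi2\<close> is \<open>\<phi>\<^sub>1' \<phi>\<^sub>1\<close> its derivative is \<open>\<phi>\<^sub>1'\<close> times a negative definite form, which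
  yields \<open>V' \<le> - \<gamma>\<^sub>1 V - \<gamma>\<^sub>2 V powr (1 / p)\<close>. Where \<open>e\<^sub>1 = 0 \<noteq> e\<^sub>2\<close> the solution crosses the
  hyperplane transversally and the upper right Dini derivative of \<open>V\<close> is \<open>-\<infinity>\<close>; at the
  origin it is \<open>0\<close>. A comparison lemma for Dini derivatives then shows that \<open>V\<close> is
  non-increasing (hence stability) and that \<open>settling_time \<circ> V\<close>, whose derivative is
  \<open>V' / (\<gamma>\<^sub>1 V + \<gamma>\<^sub>2 V powr (1 / p)) \<le> -1\<close>, drives \<open>V\<close> to zero before the settling time.
\<close>

section \<open>Upper right Dini derivatives\<close>

definition upper_right_dini_le :: "(real \<Rightarrow> real) \<Rightarrow> real \<Rightarrow> real \<Rightarrow> bool" where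
  "upper_right_dini_le f t c \<longleftrightarrow>
     (\<forall>\<epsilon>>0. eventually (\<lambda>h. (f (t + h) - f t) / h \<le> c + \<epsilon>) (at_right 0))"

lemma upper_right_dini_le_mono:
  "upper_right_dini_le f t c \<Longrightarrow> c \<le> c' \<Longrightarrow> upper_right_dini_le f t c'"
  unfolding upper_right_dini_le_def by (smt (verit, del_insts) eventually_mono)

lemma right_locally_antimono_imp_le:
  fixes g :: "real \<Rightarrow> real"
  assumes "a \<le> b" and cont: "continuous_on {a..b} g"
    and step: "\<And>t. t \<in> {a..<b} \<Longrightarrow> eventually (\<lambda>h. g (t + h) \<le> g t) (at_right 0)"
  shows "g b \<le> g a"
proof -
  define S where "S = {t \<in> {a..b}. \<forall>\<tau>\<in>{a..t}. g \<tau> \<le> g a}"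
  define \<sigma> where "\<sigma> = Sup S"
  have "a \<in> S" using \<open>a \<le> b\<close> by (auto simp: S_def)
  have bdd: "bdd_above S" by (auto simp: S_def bdd_above_def)
  have "a \<le> \<sigma>" using \<open>a \<in> S\<close> bdd unfolding \<sigma>_def by (rule cSup_upper)
  have "\<sigma> \<le> b" unfolding \<sigma>_def using \<open>a \<in> S\<close> by (intro cSup_least) (auto simp: S_def)
  have below: "g \<tau> \<le> g a" if "a \<le> \<tau>" "\<tau> < \<sigma>" for \<tau>
  proof -
    obtain t where "t \<in> S" "\<tau> < t"
      using less_cSupD[of S \<tau>] \<open>a \<in> S\<close> \<open>\<tau> < \<sigma>\<close> unfolding \<sigma>_def by blast
    thus ?thesis using that by (auto simp: S_def)
  qed
  have "g \<sigma> \<le> g a"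
  proof (cases "a = \<sigma>")
    case False
    hence "a < \<sigma>" using \<open>a \<le> \<sigma>\<close> by simp
    have "at_left \<sigma> = at \<sigma> within {a..\<sigma>}" using at_within_Icc_at_left[OF \<open>a < \<sigma>\<close>] by simp
    also have "\<dots> \<le> at \<sigma> within {a..b}" using \<open>\<sigma> \<le> b\<close> by (intro at_le) auto
    finally have "at_left \<sigma> \<le> at \<sigma> within {a..b}" .
    moreover have "(g \<longlongrightarrow> g \<sigma>) (at \<sigma> within {a..b})"
      using cont \<open>a \<le> \<sigma>\<close> \<open>\<sigma> \<le> b\<close> by (simp add: continuous_on_def)
    ultimately have "(g \<longlongrightarrow> g \<sigma>) (at_left \<sigma>)" by (rule tendsto_mono)
    moreover have "eventually (\<lambda>\<tau>. g \<tau> \<le> g a) (at_left \<sigma>)"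
      using \<open>a < \<sigma>\<close> by (intro eventually_at_leftI[of a]) (auto intro: below)
    ultimately show ?thesis by (intro tendsto_upperbound[of g]) auto
  qed simp
  hence "\<sigma> \<in> S" using below \<open>a \<le> \<sigma>\<close> \<open>\<sigma> \<le> b\<close> by (auto simp: S_def) (metis antisym_conv2)
  have "\<sigma> = b"
  proof (rule ccontr)
    assume "\<sigma> \<noteq> b"
    hence "\<sigma> < b" using \<open>\<sigma> \<le> b\<close> by simp
    then obtain h0 where "h0 > 0" and h0: "\<And>h. 0 < h \<Longrightarrow> h < h0 \<Longrightarrow> g (\<sigma> + h) \<le> g \<sigma>"
      using step[of \<sigma>] \<open>a \<le> \<sigma>\<close> unfolding eventually_at_right_field by auto
    define h1 where "h1 = min (h0 / 2) (b - \<sigma>)"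
    have h1: "0 < h1" "h1 < h0" "\<sigma> + h1 \<le> b" using \<open>h0 > 0\<close> \<open>\<sigma> < b\<close> by (auto simp: h1_def)
    have "g \<tau> \<le> g a" if "\<tau> \<in> {a..\<sigma> + h1}" for \<tau>
    proof (cases "\<tau> \<le> \<sigma>")
      case False
      thus ?thesis using h0[of "\<tau> - \<sigma>"] \<open>g \<sigma> \<le> g a\<close> that h1 by auto
    qed (use \<open>\<sigma> \<in> S\<close> that in \<open>auto simp: S_def\<close>)
    hence "\<sigma> + h1 \<in> S" using h1 \<open>a \<le> \<sigma>\<close> by (auto simp: S_def)
    hence "\<sigma> + h1 \<le> \<sigma>" unfolding \<sigma>_def using bdd by (rule cSup_upper)
    thus False using h1 by simp
  qed
  thus ?thesis using \<open>g \<sigma> \<le> g a\<close> by simp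
qed

lemma upper_right_dini_le_imp_le:
  fixes f :: "real \<Rightarrow> real"
  assumes "a \<le> b" and cont: "continuous_on {a..b} f"
    and dini: "\<And>t. t \<in> {a..<b} \<Longrightarrow> upper_right_dini_le f t c"
  shows "f b \<le> f a + c * (b - a)"
proof (rule field_le_epsilon)
  fix \<epsilon> :: real assume "\<epsilon> > 0"
  define \<delta> where "\<delta> = \<epsilon> / (b - a + 1)"
  have "\<delta> > 0" using \<open>\<epsilon> > 0\<close> \<open>a \<le> b\<close> by (simp add: \<delta>_def)
  define g where "g t = f t - (c + \<delta>) * t" for t
  have "g b \<le> g a"
  proof (rule right_locally_antimono_imp_le[OF \<open>a \<le> b\<close>])
    show "continuous_on {a..b} g" unfolding g_def by (intro continuous_intros cont)
    fix t assume "t \<in> {a..<b}"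
    have "eventually (\<lambda>h. (f (t + h) - f t) / h \<le> c + \<delta>) (at_right 0)"
      using dini[OF \<open>t \<in> {a..<b}\<close>] \<open>\<delta> > 0\<close> unfolding upper_right_dini_le_def by auto
    moreover have "eventually (\<lambda>h::real. h > 0) (at_right 0)" by (rule eventually_at_right_less)
    ultimately show "eventually (\<lambda>h. g (t + h) \<le> g t) (at_right 0)"
      by eventually_elim (simp add: g_def divide_le_eq algebra_simps)
  qed
  hence "f b \<le> f a + c * (b - a) + \<delta> * (b - a)" by (simp add: g_def algebra_simps)
  also have "\<delta> * (b - a) \<le> \<epsilon>"
    using \<open>\<epsilon> > 0\<close> \<open>a \<le> b\<close> by (simp add: \<delta>_def field_simps)
  finally show "f b \<le> f a + c * (b - a) + \<epsilon>" by simp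
qed

lemma has_vector_derivative_imp_right_quotient:
  fixes f :: "real \<Rightarrow> 'a::real_normed_vector"
  assumes "(f has_vector_derivative D) (at t within S)" and "{t<..} \<subseteq> S"
  shows "((\<lambda>h. (f (t + h) - f t) /\<^sub>R h) \<longlongrightarrow> D) (at_right 0)"
proof -
  have "filterlim (\<lambda>h. t + h) (at t within S) (at_right 0)"
  proof -
    have "((\<lambda>h. t + h) \<longlongrightarrow> t + 0) (at_right (0::real))" by (intro tendsto_intros)
    moreover have "eventually (\<lambda>h. t + h \<in> S \<and> t + h \<noteq> t) (at_right (0::real))"
      using eventually_at_right_less[of 0] by eventually_elim (use assms(2) in auto)
    ultimately show ?thesis unfolding filterlim_at by simp
  qed
  moreover have "((\<lambda>y. (1 / norm (y - t)) *\<^sub>R (f y - (f t + (y - t) *\<^sub>R D))) \<longlongrightarrow> 0) (at t within S)"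
    using assms(1) unfolding has_vector_derivative_def has_derivative_within by auto
  ultimately have "((\<lambda>h. (1 / norm h) *\<^sub>R (f (t + h) - (f t + h *\<^sub>R D))) \<longlongrightarrow> 0) (at_right 0)"
    by (auto dest: filterlim_compose)
  hence "((\<lambda>h. (1 / norm h) *\<^sub>R (f (t + h) - (f t + h *\<^sub>R D)) + D) \<longlongrightarrow> 0 + D) (at_right 0)"
    by (intro tendsto_intros)
  moreover have "eventually (\<lambda>h. (1 / norm h) *\<^sub>R (f (t + h) - (f t + h *\<^sub>R D)) + D
                              = (f (t + h) - f t) /\<^sub>R h) (at_right (0::real))"
    using eventually_at_right_less[of 0]
    by (rule eventually_mono) (auto simp: algebra_simps inverse_eq_divide)
  ultimately show ?thesis by (simp add: tendsto_cong)
qed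

lemma has_vector_derivative_imp_eventually_remainder:
  fixes f :: "real \<Rightarrow> 'a::real_normed_vector"
  assumes "(f has_vector_derivative D) (at t within S)" and "{t<..} \<subseteq> S" and "\<eta> > 0"
  shows "eventually (\<lambda>h. norm (f (t + h) - f t - h *\<^sub>R D) \<le> \<eta> * h) (at_right 0)"
proof -
  have "eventually (\<lambda>h. dist ((f (t + h) - f t) /\<^sub>R h) D < \<eta>) (at_right 0)"
    using has_vector_derivative_imp_right_quotient[OF assms(1,2)] \<open>\<eta> > 0\<close> by (rule tendstoD)
  moreover have "eventually (\<lambda>h::real. h > 0) (at_right 0)" by (rule eventually_at_right_less)
  ultimately show ?thesis
  proof eventually_elim
    case (elim h)
    have "f (t + h) - f t - h *\<^sub>R D = h *\<^sub>R ((f (t + h) - f t) /\<^sub>R h - D)"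
      using elim(2) by (simp add: scaleR_diff_right)
    hence "norm (f (t + h) - f t - h *\<^sub>R D) = h * dist ((f (t + h) - f t) /\<^sub>R h) D"
      using elim(2) by (simp add: dist_norm)
    thus ?case using elim by (simp add: mult.commute)
  qed
qed

lemma has_real_derivative_imp_upper_right_dini_le:
  assumes "(f has_real_derivative D) (at t within S)" and "{t<..} \<subseteq> S" and "D \<le> c"
  shows "upper_right_dini_le f t c"
  unfolding upper_right_dini_le_def
proof (intro allI impI)
  fix \<epsilon> :: real assume "\<epsilon> > 0"
  have "((\<lambda>h. (f (t + h) - f t) /\<^sub>R h) \<longlongrightarrow> D) (at_right 0)"
    using assms(1,2) has_real_derivative_iff_has_vector_derivative
    by (blast intro: has_vector_derivative_imp_right_quotient)
  hence "eventually (\<lambda>h. (f (t + h) - f t) /\<^sub>R h < D + \<epsilon>) (at_right 0)"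
    using \<open>\<epsilon> > 0\<close> by (intro order_tendstoD) auto
  thus "eventually (\<lambda>h. (f (t + h) - f t) / h \<le> c + \<epsilon>) (at_right 0)"
    by (rule eventually_mono) (use assms(3) in \<open>auto simp: divide_inverse mult.commute\<close>)
qed

lemma has_vector_derivative_inner:
  fixes u w :: "real \<Rightarrow> 'a::real_inner"
  assumes "(u has_vector_derivative U) (at t within S)"
    and "(w has_vector_derivative W) (at t within S)"
  shows "((\<lambda>\<tau>. u \<tau> \<bullet> w \<tau>) has_real_derivative (u t \<bullet> W + U \<bullet> w t)) (at t within S)"
proof -
  have "((\<lambda>\<tau>. u \<tau> \<bullet> w \<tau>) has_derivative (\<lambda>h. u t \<bullet> (h *\<^sub>R W) + (h *\<^sub>R U) \<bullet> w t)) (at t within S)"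
    using assms unfolding has_vector_derivative_def by (intro has_derivative_inner) auto
  thus ?thesis unfolding has_field_derivative_def
    by (rule has_derivative_eq_rhs) (auto simp: algebra_simps)
qed

section \<open>Finite-time decay and the settling time\<close>

lemma powr_le_tangent:
  fixes x y r :: real
  assumes "x > 0" "y \<ge> 0" "0 < r" "r < 1"
  shows "y powr r \<le> x powr r + r * x powr (r - 1) * (y - x)"
proof -
  have x_pow: "x powr (r - 1) * x = x powr r" using assms(1) by (simp add: powr_diff field_simps)
  have "y powr r * x powr (1 - r) \<le> r * y + (1 - r) * x"
  proof (cases "y = 0")
    case False
    thus ?thesis using Youngs_inequality_0[of r "1 - r" y x] assms by simp
  qed (use assms in auto)
  hence "y powr r * x powr (1 - r) * x powr (r - 1) \<le> (r * y + (1 - r) * x) * x powr (r - 1)"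
    by (intro mult_right_mono) auto
  moreover have "x powr (1 - r) * x powr (r - 1) = 1" using assms by (simp flip: powr_add)
  ultimately show ?thesis using x_pow by (simp add: algebra_simps)
qed

definition settling_time :: "real \<Rightarrow> real \<Rightarrow> real \<Rightarrow> real \<Rightarrow> real" where
  "settling_time l1 l2 \<alpha> v = 1 / (l1 * (1 - \<alpha>)) * ln ((l1 * v powr (1 - \<alpha>) + l2) / l2)"

context
  fixes l1 l2 \<alpha> :: real
  assumes l1: "l1 > 0" and l2: "l2 > 0" and \<alpha>: "0 < \<alpha>" "\<alpha> < 1"
begin

lemma settling_time_nonneg: "v \<ge> 0 \<Longrightarrow> settling_time l1 l2 \<alpha> v \<ge> 0"
  using l1 l2 \<alpha> by (simp add: settling_time_def field_simps)

lemma settling_time_pos: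
  assumes "v > 0"
  shows "settling_time l1 l2 \<alpha> v > 0"
proof -
  have "(l1 * v powr (1 - \<alpha>) + l2) / l2 > 1" using assms l1 l2 by (simp add: field_simps)
  thus ?thesis using l1 \<alpha> by (simp add: settling_time_def)
qed

lemma continuous_on_settling_time: "continuous_on {0<..} (settling_time l1 l2 \<alpha>)"
proof -
  have "l1 * v powr (1 - \<alpha>) + l2 > 0" for v
    using l1 l2 by (simp add: add_nonneg_pos)
  thus ?thesis unfolding settling_time_def[abs_def] using l2
    by (intro continuous_intros) (auto simp: less_imp_neq[symmetric])
qed

lemma settling_time_le_tangent:
  assumes "x > 0" "y \<ge> 0"
  shows "settling_time l1 l2 \<alpha> y \<le> settling_time l1 l2 \<alpha> x + (y - x) / (l1 * x + l2 * x powr \<alpha>)"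
proof -
  define A where "A = l1 * x powr (1 - \<alpha>) + l2"
  define B where "B = l1 * y powr (1 - \<alpha>) + l2"
  have "A > 0" "B > 0" using l1 l2 by (auto simp: A_def B_def intro!: add_nonneg_pos)
  have "ln (B / l2) - ln (A / l2) = ln (B / A)" using \<open>A > 0\<close> \<open>B > 0\<close> l2 by (simp add: ln_div)
  also have "\<dots> \<le> B / A - 1" using \<open>A > 0\<close> \<open>B > 0\<close> by (intro ln_le_minus_one) auto
  also have "\<dots> = l1 * (y powr (1 - \<alpha>) - x powr (1 - \<alpha>)) / A"
    using \<open>A > 0\<close> by (simp add: A_def B_def field_simps)
  also have "\<dots> \<le> l1 * ((1 - \<alpha>) * x powr (- \<alpha>) * (y - x)) / A"
    using powr_le_tangent[of x y "1 - \<alpha>"] assms l1 \<alpha> \<open>A > 0\<close>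
    by (intro divide_right_mono mult_left_mono) auto
  finally have ln_le: "ln (B / l2) - ln (A / l2) \<le> l1 * ((1 - \<alpha>) * x powr (- \<alpha>) * (y - x)) / A" .
  have "x powr \<alpha> * x powr (1 - \<alpha>) = x" using assms by (simp flip: powr_add)
  hence "l1 * x + l2 * x powr \<alpha> = x powr \<alpha> * A" by (simp add: A_def algebra_simps)
  hence "(y - x) / (l1 * x + l2 * x powr \<alpha>) = x powr (- \<alpha>) * (y - x) / A"
    by (simp add: powr_minus_divide)
  moreover have "1 / (l1 * (1 - \<alpha>)) * (l1 * ((1 - \<alpha>) * x powr (- \<alpha>) * (y - x)) / A)
                   = x powr (- \<alpha>) * (y - x) / A"
    using l1 \<alpha> \<open>A > 0\<close> by (simp add: field_simps)
  moreover have "settling_time l1 l2 \<alpha> y - settling_time l1 l2 \<alpha> x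
                   = 1 / (l1 * (1 - \<alpha>)) * (ln (B / l2) - ln (A / l2))"
    by (simp add: settling_time_def A_def B_def algebra_simps)
  ultimately show ?thesis
    using mult_left_mono[OF ln_le, of "1 / (l1 * (1 - \<alpha>))"] l1 \<alpha> by simp
qed

lemma upper_right_dini_settling_time:
  assumes "v t > 0" and nonneg: "\<And>h. h > 0 \<Longrightarrow> v (t + h) \<ge> 0"
    and decay: "upper_right_dini_le v t (- l1 * v t - l2 * v t powr \<alpha>)"
  shows "upper_right_dini_le (\<lambda>s. settling_time l1 l2 \<alpha> (v s)) t (-1)"
  unfolding upper_right_dini_le_def
proof (intro allI impI)
  fix \<epsilon> :: real assume "\<epsilon> > 0"
  define K where "K = l1 * v t + l2 * v t powr \<alpha>"
  have "K > 0" using \<open>v t > 0\<close> l1 l2 by (simp add: K_def add_pos_pos)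
  hence "eventually (\<lambda>h. (v (t + h) - v t) / h \<le> - l1 * v t - l2 * v t powr \<alpha> + \<epsilon> * K) (at_right 0)"
    using decay \<open>\<epsilon> > 0\<close> unfolding upper_right_dini_le_def by simp
  hence "eventually (\<lambda>h. (v (t + h) - v t) / h \<le> - K + \<epsilon> * K) (at_right 0)"
    by (simp add: K_def algebra_simps)
  moreover have "eventually (\<lambda>h::real. h > 0) (at_right 0)" by (rule eventually_at_right_less)
  ultimately show "eventually (\<lambda>h. (settling_time l1 l2 \<alpha> (v (t + h))
                                       - settling_time l1 l2 \<alpha> (v t)) / h \<le> -1 + \<epsilon>) (at_right 0)"
  proof eventually_elim
    case (elim h)
    have "settling_time l1 l2 \<alpha> (v (t + h)) - settling_time l1 l2 \<alpha> (v t) \<le> (v (t + h) - v t) / K"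
      using settling_time_le_tangent[OF \<open>v t > 0\<close> nonneg[of h]] elim by (simp add: K_def)
    hence "(settling_time l1 l2 \<alpha> (v (t + h)) - settling_time l1 l2 \<alpha> (v t)) / h
             \<le> ((v (t + h) - v t) / K) / h"
      using elim by (intro divide_right_mono) auto
    also have "\<dots> = ((v (t + h) - v t) / h) / K" by simp
    also have "\<dots> \<le> (- K + \<epsilon> * K) / K" using elim \<open>K > 0\<close> by (intro divide_right_mono) auto
    also have "\<dots> = -1 + \<epsilon>" using \<open>K > 0\<close> by (simp add: field_simps)
    finally show ?case .
  qed
qed

context
  fixes v :: "real \<Rightarrow> real"
  assumes cont: "continuous_on {0..} v" and nonneg: "\<And>t. t \<ge> 0 \<Longrightarrow> v t \<ge> 0"
    and decay: "\<And>t. t \<ge> 0 \<Longrightarrow> upper_right_dini_le v t (- l1 * v t - l2 * v t powr \<alpha>)"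
begin

lemma finite_time_decay_antimono:
  assumes "0 \<le> s" "s \<le> t"
  shows "v t \<le> v s"
proof -
  have "v t \<le> v s + 0 * (t - s)"
  proof (rule upper_right_dini_le_imp_le[OF \<open>s \<le> t\<close>])
    show "continuous_on {s..t} v" using cont by (rule continuous_on_subset) (use assms in auto)
    fix \<tau> assume "\<tau> \<in> {s..<t}"
    hence "\<tau> \<ge> 0" using assms by auto
    have "l1 * v \<tau> \<ge> 0" "l2 * v \<tau> powr \<alpha> \<ge> 0" using nonneg[OF \<open>\<tau> \<ge> 0\<close>] l1 l2 by simp_all
    thus "upper_right_dini_le v \<tau> 0"
      using decay[OF \<open>\<tau> \<ge> 0\<close>] by (elim upper_right_dini_le_mono) simp
  qed
  thus ?thesis by simp
qed

lemma finite_time_decay_settles: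
  assumes "settling_time l1 l2 \<alpha> (v 0) \<le> t"
  shows "v t = 0"
proof -
  define T where "T = settling_time l1 l2 \<alpha> (v 0)"
  have "T \<ge> 0" unfolding T_def using settling_time_nonneg nonneg[of 0] by auto
  have "v T = 0"
  proof (rule ccontr)
    assume "v T \<noteq> 0"
    hence "v T > 0" using nonneg[OF \<open>T \<ge> 0\<close>] by linarith
    have pos: "v s > 0" if "s \<in> {0..T}" for s
      using finite_time_decay_antimono[of s T] that \<open>v T > 0\<close> by auto
    have "settling_time l1 l2 \<alpha> (v T) \<le> settling_time l1 l2 \<alpha> (v 0) + (-1) * (T - 0)"
    proof (rule upper_right_dini_le_imp_le[OF \<open>T \<ge> 0\<close>])
      have "continuous_on {0..T} v" using cont by (rule continuous_on_subset) auto
      thus "continuous_on {0..T} (\<lambda>s. settling_time l1 l2 \<alpha> (v s))"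
        using continuous_on_settling_time pos by (elim continuous_on_compose2) auto
      fix s assume "s \<in> {0..<T}"
      thus "upper_right_dini_le (\<lambda>s. settling_time l1 l2 \<alpha> (v s)) s (-1)"
        using pos nonneg decay by (intro upper_right_dini_settling_time) auto
    qed
    moreover have "settling_time l1 l2 \<alpha> (v T) > 0" using settling_time_pos \<open>v T > 0\<close> by blast
    ultimately show False by (simp add: T_def)
  qed
  thus ?thesis
    using finite_time_decay_antimono[of T t] nonneg[of t] \<open>T \<ge> 0\<close> assms by (simp add: T_def)
qed

end

end

section \<open>The error system\<close>

lemma filterlim_powr_neg_at_right_0:
  fixes b :: real
  assumes "b < 0"
  shows "filterlim (\<lambda>h. h powr b) at_top (at_right 0)"
proof -
  have "((\<lambda>h::real. h powr (- b)) \<longlongrightarrow> 0) (at_right 0)"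
    using assms by (intro tendsto_zero_powrI[of _ _ _ "- b"])
                   (auto intro: tendsto_ident_at eventually_at_rightI[of 0 1])
  moreover have "eventually (\<lambda>h::real. 0 < h powr (- b)) (at_right 0)"
    by (rule eventually_at_rightI[of 0 1]) auto
  ultimately have lim: "filterlim (\<lambda>h. inverse (h powr (- b))) at_top (at_right (0::real))"
    by (rule filterlim_inverse_at_top)
  have "eventually (\<lambda>h::real. inverse (h powr (- b)) = h powr b) (at_right 0)"
    by (rule eventually_at_rightI[of 0 1]) (auto simp: powr_minus)
  from filterlim_cong[OF refl refl this, THEN iffD1, OF lim] show ?thesis .
qed

lemma inner_lower_bound_near_velocity:
  fixes y w w0 :: "'a::real_inner"
  assumes "0 < h" "h \<le> norm w0 / 8"
    and y: "norm (y - h *\<^sub>R w0) \<le> norm w0 / 4 * h" and w: "norm (w - w0) \<le> h"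
  shows "norm y \<le> 2 * norm w0 * h" and "(norm w0)\<^sup>2 / 2 * h \<le> y \<bullet> w"
proof -
  define c where "c = norm w0"
  have "norm y \<le> h * c + norm (y - h *\<^sub>R w0)"
    using norm_triangle_sub[of y "h *\<^sub>R w0"] \<open>0 < h\<close> by (simp add: c_def)
  moreover have "0 \<le> c * h" using \<open>0 < h\<close> by (simp add: c_def)
  ultimately show ny: "norm y \<le> 2 * norm w0 * h" using y by (simp add: c_def algebra_simps)
  define X where "X = c / 4 * h * c"
  have "y \<bullet> w = 4 * X + (y - h *\<^sub>R w0) \<bullet> w0 + y \<bullet> (w - w0)"
    by (simp add: X_def c_def inner_diff_left inner_diff_right power2_eq_square algebra_simps
             flip: power2_norm_eq_inner)
  moreover have "\<bar>(y - h *\<^sub>R w0) \<bullet> w0\<bar> \<le> X"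
    using Cauchy_Schwarz_ineq2[of "y - h *\<^sub>R w0" w0] y
    by (smt (verit, best) X_def c_def mult_right_mono norm_ge_zero)
  moreover have "\<bar>y \<bullet> (w - w0)\<bar> \<le> 2 * c * h * h"
    using Cauchy_Schwarz_ineq2[of y "w - w0"] ny w
    by (smt (verit, best) c_def mult_mono norm_ge_zero)
  moreover have "2 * c * h * h \<le> X"
  proof -
    have "(c * h / 4) * (8 * h) \<le> (c * h / 4) * c"
      using assms(1,2) by (intro mult_left_mono) (auto simp: c_def)
    thus ?thesis by (simp add: X_def algebra_simps)
  qed
  moreover have "(norm w0)\<^sup>2 / 2 * h = 2 * X" by (simp add: X_def c_def power2_eq_square)
  ultimately show "(norm w0)\<^sup>2 / 2 * h \<le> y \<bullet> w" by linarith
qed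

locale err_sys_gains =
  fixes p k1 k2 k3 :: real
  assumes p_gt_1: "1 < p" and p_lt_2: "p < 2"
    and k1_pos: "k1 > 0" and k2_pos: "k2 > 0" and k3_pos: "k3 > 0"
begin

abbreviation \<phi>\<^sub>1 :: "real^'n \<Rightarrow> real^'n" where "\<phi>\<^sub>1 \<equiv> phi1 p k3"

definition \<beta> :: real where "\<beta> = (1 - p) / (3 * p - 2)"

lemma \<beta>_neg: "\<beta> < 0"
  using p_gt_1 by (simp add: \<beta>_def divide_neg_pos)

lemma one_plus_two_\<beta>: "1 + 2 * \<beta> = p / (3 * p - 2)"
  using p_gt_1 by (simp add: \<beta>_def field_simps)

lemma one_plus_two_\<beta>_gt_half: "1 / 2 < 1 + 2 * \<beta>"
proof -
  have "1 / 2 < p / (3 * p - 2)" using p_gt_1 p_lt_2 by (simp add: field_simps)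
  thus ?thesis by (simp only: one_plus_two_\<beta>)
qed

lemma one_plus_two_\<beta>_times: "(1 + 2 * \<beta>) * (1 / p - 1) = \<beta>"
  using p_gt_1 by (simp add: one_plus_two_\<beta> \<beta>_def field_simps)

lemma inverse_p_bounds: "0 < 1 / p" "1 / p < 1"
  using p_gt_1 by auto

lemma phi1_eq: "\<phi>\<^sub>1 e = (k3 + (e \<bullet> e) powr \<beta>) *\<^sub>R e"
  by (simp add: phi1_def \<beta>_def scaleR_add_left)

text \<open>In one dimension \<open>phi2 = phi1' * phi1\<close>; this is what makes the cross terms cancel in the
  derivative of the Lyapunov function.\<close>
lemma phi2_eq:
  "phi2 p k3 e = ((k3 + (e \<bullet> e) powr \<beta>) * (k3 + (1 + 2 * \<beta>) * (e \<bullet> e) powr \<beta>)) *\<^sub>R e"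
proof (cases "e = 0")
  case False
  define S where "S = (e \<bullet> e) powr \<beta>"
  have "(e \<bullet> e) powr (2 * (1 - p) / (3 * p - 2)) = S * S"
    unfolding S_def \<beta>_def by (simp flip: powr_add)
  moreover have "k3\<^sup>2 + 2 * k3 * (2 * p - 1) / (3 * p - 2) * S + p / (3 * p - 2) * (S * S)
                   = (k3 + S) * (k3 + (1 + 2 * \<beta>) * S)"
  proof -
    have "2 * k3 * (2 * p - 1) / (3 * p - 2) = k3 * (1 + (1 + 2 * \<beta>))"
      using p_gt_1 unfolding \<beta>_def by (simp add: field_simps)
    thus ?thesis unfolding one_plus_two_\<beta>[symmetric] by (simp add: algebra_simps power2_eq_square)
  qed
  ultimately show ?thesis using False
    unfolding phi2_def S_def[symmetric] \<beta>_def[symmetric] by (simp flip: scaleR_add_left)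
qed (simp add: phi2_def)

lemma norm_phi1: "norm (\<phi>\<^sub>1 e) = k3 * norm e + norm e powr (1 + 2 * \<beta>)"
proof -
  have "e \<bullet> e = norm e powr 2"
    by (cases "e = 0") (simp_all add: powr_realpow flip: power2_norm_eq_inner)
  hence "(e \<bullet> e) powr \<beta> = norm e powr (2 * \<beta>)" by (simp only: powr_powr)
  hence "(e \<bullet> e) powr \<beta> * norm e = norm e powr (1 + 2 * \<beta>)"
    by (cases "e = 0") (simp_all add: powr_add)
  moreover have "\<bar>k3 + (e \<bullet> e) powr \<beta>\<bar> = k3 + (e \<bullet> e) powr \<beta>" using k3_pos by simp
  ultimately show ?thesis unfolding phi1_eq norm_scaleR by (simp add: algebra_simps)
qed

lemma continuous_phi1: "continuous_on UNIV (\<phi>\<^sub>1 :: real^'n \<Rightarrow> real^'n)"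
proof -
  have "isCont \<phi>\<^sub>1 e" for e :: "real^'n"
  proof (cases "e = 0")
    case False
    hence "e \<bullet> e \<noteq> 0" by simp
    thus ?thesis unfolding phi1_eq[abs_def] by (intro continuous_intros) auto
  next
    case True
    have "((\<lambda>x::real^'n. k3 * norm x + norm x powr (1 + 2 * \<beta>))
            \<longlongrightarrow> k3 * norm (0::real^'n) + 0) (at 0)"
      using one_plus_two_\<beta>_gt_half
      by (intro tendsto_intros tendsto_zero_powrI[where b = "1 + 2 * \<beta>"])
         (auto intro!: tendsto_eq_intros)
    hence "(\<phi>\<^sub>1 \<longlongrightarrow> 0) (at (0::real^'n))" by (simp add: tendsto_norm_zero_iff flip: norm_phi1)
    thus ?thesis using True by (simp add: isCont_def phi1_def)
  qed
  thus ?thesis by (simp add: continuous_on_eq_continuous_at)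
qed

text \<open>\<open>V\<close> below is the quadratic form of \<open>[[c1, -1], [-1, c2]]\<close> in \<open>(\<phi>\<^sub>1 e\<^sub>1, e\<^sub>2)\<close>.
  The choice \<open>c2 k2 = c1 + k1\<close> cancels the cross terms of its derivative, \<open>c1 \<ge> 2 k2 / k1\<close>
  makes \<open>c1 k1 - k2 \<ge> k2\<close>, and \<open>c1, c2 \<ge> 2\<close> makes the form dominate the identity.\<close>

definition c1 :: real where "c1 = 2 + 2 * k2 / k1 + 2 * k2"
definition c2 :: real where "c2 = (c1 + k1) / k2"
definition cM :: real where "cM = c1 + c2 + 2"
definition \<kappa> :: real where "\<kappa> = min k2 1"
definition \<gamma>\<^sub>1 :: real where "\<gamma>\<^sub>1 = 2 * \<kappa> * k3 / cM"
definition \<gamma>\<^sub>2 :: real where "\<gamma>\<^sub>2 = 2 * \<kappa> * (1 + 2 * \<beta>) / cM powr (1 / p)"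

lemma c1_ge_2: "c1 \<ge> 2"
  using k1_pos k2_pos by (simp add: c1_def)

lemma c2_ge_2: "c2 \<ge> 2"
proof -
  have "c1 + k1 \<ge> 2 * k2" using k1_pos k2_pos by (simp add: c1_def)
  thus ?thesis using k2_pos by (simp add: c2_def le_divide_eq)
qed

lemma c1_k1: "k2 \<le> c1 * k1 - k2"
  using k1_pos k2_pos by (simp add: c1_def field_simps)

lemma cM_pos: "cM > 0"
  using c1_ge_2 c2_ge_2 by (simp add: cM_def)

lemma \<kappa>_pos: "\<kappa> > 0" and \<kappa>_le_k2: "\<kappa> \<le> k2" and \<kappa>_le_1: "\<kappa> \<le> 1"
  using k2_pos by (auto simp: \<kappa>_def)

lemma \<gamma>\<^sub>1_pos: "\<gamma>\<^sub>1 > 0"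
  using \<kappa>_pos k3_pos cM_pos by (simp add: \<gamma>\<^sub>1_def)

lemma \<gamma>\<^sub>2_pos: "\<gamma>\<^sub>2 > 0"
  using \<kappa>_pos cM_pos one_plus_two_\<beta>_gt_half by (simp add: \<gamma>\<^sub>2_def)

definition V :: "(real^'n) \<times> (real^'n) \<Rightarrow> real" where
  "V x = c1 * (\<phi>\<^sub>1 (fst x) \<bullet> \<phi>\<^sub>1 (fst x)) - 2 * (\<phi>\<^sub>1 (fst x) \<bullet> snd x) + c2 * (snd x \<bullet> snd x)"

lemma V_zero [simp]: "V 0 = 0"
  by (simp add: V_def phi1_def)

lemma continuous_V: "continuous_on UNIV V"
proof -
  have "continuous_on UNIV (\<lambda>x::(real^'n) \<times> (real^'n). \<phi>\<^sub>1 (fst x))"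
    using continuous_phi1 by (rule continuous_on_compose2) (auto intro: continuous_intros)
  thus ?thesis unfolding V_def[abs_def] by (intro continuous_intros)
qed

lemma V_bounds:
  shows V_ge: "\<phi>\<^sub>1 u \<bullet> \<phi>\<^sub>1 u + w \<bullet> w \<le> V (u, w)"
    and V_le: "V (u, w) \<le> cM * (\<phi>\<^sub>1 u \<bullet> \<phi>\<^sub>1 u + w \<bullet> w)"
proof -
  define f where "f = \<phi>\<^sub>1 u"
  have "0 \<le> (f - w) \<bullet> (f - w)" "0 \<le> (f + w) \<bullet> (f + w)" by simp_all
  hence "2 * \<bar>f \<bullet> w\<bar> \<le> f \<bullet> f + w \<bullet> w"
    by (simp add: inner_diff_left inner_diff_right inner_add_left inner_add_right inner_commute
        abs_if)
  moreover have "2 * (f \<bullet> f) \<le> c1 * (f \<bullet> f)" "2 * (w \<bullet> w) \<le> c2 * (w \<bullet> w)"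
    using c1_ge_2 c2_ge_2 by (simp_all add: mult_right_mono)
  moreover have "c2 * (f \<bullet> f) \<ge> 0" "c1 * (w \<bullet> w) \<ge> 0" using c1_ge_2 c2_ge_2 by simp_all
  ultimately show "f \<bullet> f + w \<bullet> w \<le> V (u, w)" and "V (u, w) \<le> cM * (f \<bullet> f + w \<bullet> w)"
    by (simp_all add: V_def f_def cM_def algebra_simps)
qed

lemma phi1_inner_ge: "k3\<^sup>2 * (u \<bullet> u) \<le> \<phi>\<^sub>1 u \<bullet> \<phi>\<^sub>1 u"
proof -
  have "k3\<^sup>2 \<le> (k3 + (u \<bullet> u) powr \<beta>)\<^sup>2" using k3_pos by (intro power_mono) auto
  hence "k3\<^sup>2 * (u \<bullet> u) \<le> (k3 + (u \<bullet> u) powr \<beta>)\<^sup>2 * (u \<bullet> u)" by (simp add: mult_right_mono)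
  thus ?thesis by (simp add: phi1_eq power2_eq_square)
qed

lemma V_ge_norm: "min (k3\<^sup>2) 1 * (norm x)\<^sup>2 \<le> V x"
proof -
  obtain u w where x: "x = (u, w)" by (cases x)
  have "min (k3\<^sup>2) 1 * (norm x)\<^sup>2 = min (k3\<^sup>2) 1 * (u \<bullet> u) + min (k3\<^sup>2) 1 * (w \<bullet> w)"
    by (simp add: x norm_Pair power2_norm_eq_inner algebra_simps)
  also have "\<dots> \<le> k3\<^sup>2 * (u \<bullet> u) + 1 * (w \<bullet> w)" by (intro add_mono mult_right_mono) auto
  also have "\<dots> \<le> V x" using phi1_inner_ge[of u] V_ge[of u w] by (simp add: x)
  finally show ?thesis .
qed

lemma V_nonneg: "V x \<ge> 0"
  using V_ge_norm[of x] by (smt (verit) zero_le_mult_iff zero_le_power2)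

lemma V_pos: "x \<noteq> 0 \<Longrightarrow> V x > 0"
  using V_ge_norm[of x] k3_pos by (smt (verit) mult_pos_pos zero_less_norm_iff zero_less_power)

text \<open>The derivative of \<open>V = c1 g\<^sup>2 s - 2 g q + c2 z\<close> along the flow, written in the scalars
  \<open>s = e\<^sub>1 \<bullet> e\<^sub>1\<close>, \<open>q = e\<^sub>1 \<bullet> e\<^sub>2\<close>, \<open>z = e\<^sub>2 \<bullet> e\<^sub>2\<close>, where \<open>\<phi>\<^sub>1 e\<^sub>1 = g e\<^sub>1\<close>, \<open>phi2 e\<^sub>1 = g d e\<^sub>1\<close>
  and \<open>S = s powr \<beta>\<close>.\<close>
lemma lie_derivative_eq:
  fixes s q z S :: real
  assumes "s > 0"
  defines "g \<equiv> k3 + S" and "d \<equiv> k3 + (1 + 2 * \<beta>) * S"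
  defines "ds \<equiv> 2 * (q - k1 * g * s)" and "dq \<equiv> - k1 * g * q + z - k2 * g * d * s"
    and "dz \<equiv> - 2 * k2 * g * d * q"
  defines "dS \<equiv> \<beta> * (S / s) * ds"
  shows "c1 * (2 * g * dS * s + g\<^sup>2 * ds) - 2 * (dS * q + g * dq) + c2 * dz
           = - 2 * (c1 * k1 - k2) * d * g\<^sup>2 * s - 4 * \<beta> * (S / s) * q\<^sup>2 - 2 * g * z"
  unfolding g_def d_def ds_def dq_def dz_def dS_def c2_def using \<open>s > 0\<close> k2_pos
  by (simp add: field_simps power2_eq_square)

lemma lie_derivative_le:
  fixes s q z S :: real
  assumes "s > 0" "S > 0" "z \<ge> 0" "q\<^sup>2 \<le> s * z"
  defines "g \<equiv> k3 + S" and "d \<equiv> k3 + (1 + 2 * \<beta>) * S"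
  shows "- 2 * (c1 * k1 - k2) * d * g\<^sup>2 * s - 4 * \<beta> * (S / s) * q\<^sup>2 - 2 * g * z
           \<le> - 2 * \<kappa> * d * (g\<^sup>2 * s + z)"
proof -
  have "d > 0" using assms(2) k3_pos one_plus_two_\<beta>_gt_half by (simp add: d_def add_pos_pos)
  hence "0 \<le> d * g\<^sup>2 * s" "0 \<le> d * z" using assms by simp_all
  have "k2 * (d * g\<^sup>2 * s) \<le> (c1 * k1 - k2) * (d * g\<^sup>2 * s)"
    using c1_k1 \<open>0 \<le> d * g\<^sup>2 * s\<close> by (rule mult_right_mono)
  moreover have "0 \<le> - 4 * \<beta> * (S / s)" by (rule mult_nonneg_nonneg) (use \<beta>_neg assms in auto)
  hence "(- 4 * \<beta> * (S / s)) * q\<^sup>2 \<le> (- 4 * \<beta> * (S / s)) * (s * z)"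
    by (rule mult_left_mono[OF assms(4)])
  moreover have "- 4 * \<beta> * (S / s) * (s * z) - 2 * g * z = - 2 * d * z"
    using \<open>s > 0\<close> by (simp add: g_def d_def field_simps)
  moreover have "\<kappa> * (d * g\<^sup>2 * s) \<le> k2 * (d * g\<^sup>2 * s)"
    using \<kappa>_le_k2 \<open>0 \<le> d * g\<^sup>2 * s\<close> by (rule mult_right_mono)
  moreover have "\<kappa> * (d * z) \<le> 1 * (d * z)"
    using \<kappa>_le_1 \<open>0 \<le> d * z\<close> by (rule mult_right_mono)
  ultimately show ?thesis by (simp add: algebra_simps)
qed

lemma powr_inverse_p_le:
  assumes "s > 0" and "s powr (1 + 2 * \<beta>) \<le> Y"
  shows "Y powr (1 / p) \<le> s powr \<beta> * Y"
proof -
  have "Y > 0" using assms by (smt (verit) powr_gt_zero)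
  have "Y powr (1 / p - 1) \<le> (s powr (1 + 2 * \<beta>)) powr (1 / p - 1)"
    using assms p_gt_1 by (intro powr_mono2') (auto simp: field_simps)
  also have "\<dots> = s powr \<beta>" by (simp add: powr_powr one_plus_two_\<beta>_times)
  finally have "Y powr (1 / p - 1) * Y \<le> s powr \<beta> * Y" using \<open>Y > 0\<close> by simp
  moreover have "Y powr (1 / p) = Y powr (1 / p - 1) * Y"
    using powr_add[of Y "1 / p - 1" 1] \<open>Y > 0\<close> by simp
  ultimately show ?thesis by simp
qed

lemma decay_from_lie_derivative:
  assumes "s > 0" "z \<ge> 0" "0 \<le> v"
  defines "S \<equiv> s powr \<beta>"
  defines "g \<equiv> k3 + S" and "d \<equiv> k3 + (1 + 2 * \<beta>) * S"
  assumes "v \<le> cM * (g\<^sup>2 * s + z)"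
  shows "- 2 * \<kappa> * d * (g\<^sup>2 * s + z) \<le> - \<gamma>\<^sub>1 * v - \<gamma>\<^sub>2 * v powr (1 / p)"
proof -
  define Y where "Y = g\<^sup>2 * s + z"
  have "0 \<le> S" "S \<le> g" using k3_pos by (simp_all add: S_def g_def)
  hence "S\<^sup>2 * s \<le> g\<^sup>2 * s" using \<open>s > 0\<close> by (intro mult_right_mono power_mono) auto
  moreover have "S\<^sup>2 * s = s powr (1 + 2 * \<beta>)"
  proof -
    have "S\<^sup>2 = s powr (2 * \<beta>)" by (simp add: S_def power2_eq_square flip: powr_add)
    thus ?thesis using powr_add[of s "2 * \<beta>" 1] \<open>s > 0\<close> by (simp add: add.commute)
  qed
  ultimately have "Y powr (1 / p) \<le> S * Y"
    unfolding S_def using assms(1,2) by (intro powr_inverse_p_le) (simp_all add: Y_def)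
  moreover have "v / cM \<le> Y" using assms(7) cM_pos by (simp add: Y_def divide_le_eq mult.commute)
  ultimately have "v powr (1 / p) / cM powr (1 / p) \<le> S * Y"
    using \<open>0 \<le> v\<close> cM_pos
    by (smt (verit) powr_divide powr_mono2 divide_nonneg_pos less_eq_real_def p_gt_1)
  have "2 * \<kappa> * (1 + 2 * \<beta>) \<ge> 0" using \<kappa>_pos one_plus_two_\<beta>_gt_half by simp
  hence "\<gamma>\<^sub>2 * v powr (1 / p) \<le> 2 * \<kappa> * (1 + 2 * \<beta>) * (S * Y)"
    using mult_left_mono[OF \<open>v powr (1 / p) / cM powr (1 / p) \<le> S * Y\<close>] by (simp add: \<gamma>\<^sub>2_def)
  moreover have "\<gamma>\<^sub>1 * v \<le> 2 * \<kappa> * k3 * Y"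
    using mult_left_mono[OF \<open>v / cM \<le> Y\<close>, of "2 * \<kappa> * k3"] \<kappa>_pos k3_pos by (simp add: \<gamma>\<^sub>1_def)
  moreover have "- 2 * \<kappa> * d * Y = - 2 * \<kappa> * k3 * Y - 2 * \<kappa> * (1 + 2 * \<beta>) * (S * Y)"
    by (simp add: d_def algebra_simps)
  ultimately show ?thesis by (simp add: Y_def)
qed

abbreviation sys :: "(real^'n) \<times> (real^'n) \<Rightarrow> (real^'n) \<times> (real^'n)" where
  "sys \<equiv> err_sys p k1 k2 k3"

lemma sys_zero: "sys 0 = 0"
  by (simp add: err_sys_def phi1_def phi2_def zero_prod_def)

lemma solution_has_derivative:
  assumes "is_solution sys x" and "t \<ge> 0"
  shows "((\<lambda>\<tau>. fst (x \<tau>)) has_vector_derivative - k1 *\<^sub>R \<phi>\<^sub>1 (fst (x t)) + snd (x t))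
           (at t within {0..})" (is ?fst)
    and "((\<lambda>\<tau>. snd (x \<tau>)) has_vector_derivative - k2 *\<^sub>R phi2 p k3 (fst (x t)))
           (at t within {0..})" (is ?snd)
proof -
  have "(x has_derivative (\<lambda>h. h *\<^sub>R sys (x t))) (at t within {0..})"
    using assms unfolding is_solution_def has_vector_derivative_def by auto
  from has_derivative_fst[OF this] has_derivative_snd[OF this] show ?fst ?snd
    by (simp_all add: has_vector_derivative_def err_sys_def split_beta)
qed

lemma V_eq_scalars:
  "V (u, w) = c1 * ((k3 + (u \<bullet> u) powr \<beta>)\<^sup>2 * (u \<bullet> u)) - 2 * ((k3 + (u \<bullet> u) powr \<beta>) * (u \<bullet> w))
                + c2 * (w \<bullet> w)"
  by (simp add: V_def phi1_eq power2_eq_square)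

lemma V_has_derivative_e1_nonzero:
  assumes sol: "is_solution sys x" and "t \<ge> 0" and "fst (x t) \<noteq> 0"
  defines "s \<equiv> fst (x t) \<bullet> fst (x t)" and "q \<equiv> fst (x t) \<bullet> snd (x t)"
    and "z \<equiv> snd (x t) \<bullet> snd (x t)"
  defines "g \<equiv> k3 + s powr \<beta>" and "d \<equiv> k3 + (1 + 2 * \<beta>) * s powr \<beta>"
  shows "((\<lambda>\<tau>. V (x \<tau>)) has_real_derivative
           - 2 * (c1 * k1 - k2) * d * g\<^sup>2 * s - 4 * \<beta> * (s powr \<beta> / s) * q\<^sup>2 - 2 * g * z)
         (at t within {0..})"
proof -
  define u where "u = (\<lambda>\<tau>. fst (x \<tau>))"
  define w where "w = (\<lambda>\<tau>. snd (x \<tau>))"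
  have "s > 0" using \<open>fst (x t) \<noteq> 0\<close> by (simp add: s_def)
  have du: "(u has_vector_derivative (- (k1 * g) *\<^sub>R u t + w t)) (at t within {0..})"
    using solution_has_derivative(1)[OF sol \<open>t \<ge> 0\<close>]
    by (simp add: u_def w_def g_def s_def phi1_eq)
  have dw: "(w has_vector_derivative (- (k2 * g * d) *\<^sub>R u t)) (at t within {0..})"
    using solution_has_derivative(2)[OF sol \<open>t \<ge> 0\<close>]
    by (simp add: u_def w_def g_def d_def s_def phi2_eq mult.assoc)
  define sf where "sf = (\<lambda>\<tau>. u \<tau> \<bullet> u \<tau>)"
  define qf where "qf = (\<lambda>\<tau>. u \<tau> \<bullet> w \<tau>)"
  define zf where "zf = (\<lambda>\<tau>. w \<tau> \<bullet> w \<tau>)"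
  define Sf where "Sf = (\<lambda>\<tau>. sf \<tau> powr \<beta>)"
  have at_t: "sf t = s" "qf t = q" "zf t = z" "Sf t = s powr \<beta>"
    by (simp_all add: sf_def qf_def zf_def Sf_def s_def q_def z_def u_def w_def)
  define ds where "ds = 2 * (q - k1 * g * s)"
  define dq where "dq = - k1 * g * q + z - k2 * g * d * s"
  define dz where "dz = - 2 * k2 * g * d * q"
  define dS where "dS = \<beta> * (s powr \<beta> / s) * ds"
  have ds: "(sf has_real_derivative ds) (at t within {0..})"
    using has_vector_derivative_inner[OF du du] unfolding sf_def
    by (simp add: ds_def s_def q_def u_def w_def inner_add_left inner_add_right inner_commute
        algebra_simps)
  have dq: "(qf has_real_derivative dq) (at t within {0..})"
    using has_vector_derivative_inner[OF du dw] unfolding qf_def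
    by (simp add: dq_def s_def q_def z_def u_def w_def inner_add_left inner_add_right inner_commute
        algebra_simps)
  have dz: "(zf has_real_derivative dz) (at t within {0..})"
    using has_vector_derivative_inner[OF dw dw] unfolding zf_def
    by (simp add: dz_def q_def u_def w_def inner_commute algebra_simps)
  have dS: "(Sf has_real_derivative dS) (at t within {0..})"
    using DERIV_chain2[OF has_real_derivative_powr ds] \<open>s > 0\<close> unfolding Sf_def
    by (simp add: at_t dS_def powr_diff)
  have "(\<lambda>\<tau>. V (x \<tau>))
          = (\<lambda>\<tau>. c1 * ((k3 + Sf \<tau>)\<^sup>2 * sf \<tau>) - 2 * ((k3 + Sf \<tau>) * qf \<tau>) + c2 * zf \<tau>)"
    by (simp add: Sf_def sf_def qf_def zf_def u_def w_def flip: V_eq_scalars)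
  moreover have "((\<lambda>\<tau>. c1 * ((k3 + Sf \<tau>)\<^sup>2 * sf \<tau>) - 2 * ((k3 + Sf \<tau>) * qf \<tau>) + c2 * zf \<tau>)
      has_real_derivative c1 * (2 * g * dS * s + g\<^sup>2 * ds) - 2 * (dS * q + g * dq) + c2 * dz)
      (at t within {0..})"
    by (rule derivative_eq_intros ds dq dz dS refl | simp add: at_t g_def)+
  ultimately show ?thesis
    using lie_derivative_eq[OF \<open>s > 0\<close>, of "s powr \<beta>" q z]
    by (simp add: g_def d_def ds_def dq_def dz_def dS_def)
qed

lemma upper_right_dini_V_e1_nonzero:
  assumes sol: "is_solution sys x" and "t \<ge> 0" and "fst (x t) \<noteq> 0"
  shows "upper_right_dini_le (\<lambda>\<tau>. V (x \<tau>)) t (- \<gamma>\<^sub>1 * V (x t) - \<gamma>\<^sub>2 * V (x t) powr (1 / p))"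
proof -
  obtain u w where x_t: "x t = (u, w)" by (cases "x t")
  define s where "s = u \<bullet> u"
  define g where "g = k3 + s powr \<beta>"
  define d where "d = k3 + (1 + 2 * \<beta>) * s powr \<beta>"
  have "s > 0" using \<open>fst (x t) \<noteq> 0\<close> by (simp add: x_t s_def)
  have "(u \<bullet> w)\<^sup>2 \<le> s * (w \<bullet> w)" unfolding s_def by (rule Cauchy_Schwarz_ineq)
  hence "- 2 * (c1 * k1 - k2) * d * g\<^sup>2 * s - 4 * \<beta> * (s powr \<beta> / s) * (u \<bullet> w)\<^sup>2 - 2 * g * (w \<bullet> w)
           \<le> - 2 * \<kappa> * d * (g\<^sup>2 * s + w \<bullet> w)"
    unfolding g_def d_def using \<open>s > 0\<close> by (intro lie_derivative_le) auto
  also have "\<dots> \<le> - \<gamma>\<^sub>1 * V (x t) - \<gamma>\<^sub>2 * V (x t) powr (1 / p)"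
  proof -
    have "V (x t) \<le> cM * (g\<^sup>2 * s + w \<bullet> w)"
      using V_le[of u w] by (simp add: x_t phi1_eq g_def s_def power2_eq_square mult.assoc)
    thus ?thesis
      unfolding g_def d_def using \<open>s > 0\<close> V_nonneg[of "x t"]
      by (intro decay_from_lie_derivative) auto
  qed
  finally show ?thesis
    using V_has_derivative_e1_nonzero[OF sol \<open>t \<ge> 0\<close> \<open>fst (x t) \<noteq> 0\<close>] \<open>t \<ge> 0\<close>
    by (intro has_real_derivative_imp_upper_right_dini_le[where S = "{0..}"])
       (auto simp: x_t s_def g_def d_def)
qed

lemma phi1_inner_plus_le:
  assumes "norm u \<le> \<rho>" "norm w \<le> \<rho>" "\<rho> \<le> 1"
  shows "\<phi>\<^sub>1 u \<bullet> \<phi>\<^sub>1 u + w \<bullet> w \<le> (2 * k3\<^sup>2 + 3) * \<rho>"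
proof -
  define a where "a = 1 + 2 * \<beta>"
  have "\<rho> \<ge> 0" using assms(1) norm_ge_zero order_trans by blast
  have "\<rho> * \<rho> \<le> \<rho>" using mult_left_le[OF assms(3) \<open>\<rho> \<ge> 0\<close>] .
  have "norm u powr a \<le> \<rho> powr a"
    using assms(1) one_plus_two_\<beta>_gt_half by (intro powr_mono2) (auto simp: a_def)
  moreover have "k3 * norm u \<le> k3 * \<rho>" using assms(1) k3_pos by simp
  ultimately have "norm (\<phi>\<^sub>1 u) \<le> k3 * \<rho> + \<rho> powr a" by (simp add: norm_phi1 a_def)
  hence "(norm (\<phi>\<^sub>1 u))\<^sup>2 \<le> (k3 * \<rho> + \<rho> powr a)\<^sup>2" by (intro power_mono) auto
  also have "\<dots> \<le> 2 * (k3 * \<rho>)\<^sup>2 + 2 * (\<rho> powr a)\<^sup>2"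
    using zero_le_power2[of "k3 * \<rho> - \<rho> powr a"] by (simp add: power2_eq_square algebra_simps)
  also have "(k3 * \<rho>)\<^sup>2 \<le> k3\<^sup>2 * \<rho>"
    using mult_left_mono[OF \<open>\<rho> * \<rho> \<le> \<rho>\<close>, of "k3\<^sup>2"]
    by (simp add: power2_eq_square mult.assoc mult.left_commute)
  also have "(\<rho> powr a)\<^sup>2 \<le> \<rho>"
  proof -
    have "(\<rho> powr a)\<^sup>2 = \<rho> powr (2 * a)" by (simp add: power2_eq_square flip: powr_add)
    also have "\<dots> \<le> \<rho> powr 1"
      using \<open>\<rho> \<ge> 0\<close> assms(3) one_plus_two_\<beta>_gt_half by (intro powr_mono') (auto simp: a_def)
    finally show ?thesis using \<open>\<rho> \<ge> 0\<close> by (cases "\<rho> = 0") auto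
  qed
  finally have "\<phi>\<^sub>1 u \<bullet> \<phi>\<^sub>1 u \<le> 2 * k3\<^sup>2 * \<rho> + 2 * \<rho>" by (simp add: power2_norm_eq_inner)
  moreover have "w \<bullet> w \<le> \<rho>"
    using mult_mono[OF assms(2) assms(2)] \<open>\<rho> * \<rho> \<le> \<rho>\<close> \<open>\<rho> \<ge> 0\<close>
    by (simp add: power2_eq_square flip: power2_norm_eq_inner)
  ultimately show ?thesis by (simp add: algebra_simps)
qed

lemma V_le_norm:
  assumes "norm x \<le> 1"
  shows "V x \<le> cM * (2 * k3\<^sup>2 + 3) * norm x"
proof -
  obtain u w where x: "x = (u, w)" by (cases x)
  have "V x \<le> cM * (\<phi>\<^sub>1 u \<bullet> \<phi>\<^sub>1 u + w \<bullet> w)" using V_le by (simp add: x)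
  also have "\<dots> \<le> cM * ((2 * k3\<^sup>2 + 3) * norm x)"
  proof -
    have "norm u \<le> norm x" "norm w \<le> norm x"
      using norm_fst_le[of u w] norm_snd_le[of w u] by (simp_all add: x)
    thus ?thesis using cM_pos assms by (intro mult_left_mono phi1_inner_plus_le) auto
  qed
  finally show ?thesis by simp
qed

lemma upper_right_dini_V_origin:
  assumes sol: "is_solution sys x" and "t \<ge> 0" and "x t = 0"
  shows "upper_right_dini_le (\<lambda>\<tau>. V (x \<tau>)) t 0"
  unfolding upper_right_dini_le_def
proof (intro allI impI)
  fix \<epsilon> :: real assume "\<epsilon> > 0"
  define C where "C = cM * (2 * k3\<^sup>2 + 3)"
  have "C > 0" using cM_pos by (simp add: C_def add_nonneg_pos)
  define \<eta> where "\<eta> = min 1 (\<epsilon> / C)"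
  have "\<eta> > 0" "\<eta> \<le> 1" "C * \<eta> \<le> \<epsilon>" using \<open>C > 0\<close> \<open>\<epsilon> > 0\<close> by (auto simp: \<eta>_def min_def field_simps)
  have "eventually (\<lambda>h. norm (x (t + h) - x t - h *\<^sub>R sys (x t)) \<le> \<eta> * h) (at_right 0)"
    using sol \<open>t \<ge> 0\<close> \<open>\<eta> > 0\<close> unfolding is_solution_def
    by (intro has_vector_derivative_imp_eventually_remainder[where S = "{0..}"]) auto
  moreover have "eventually (\<lambda>h. 0 < h \<and> h < (1::real)) (at_right 0)"
    by (rule eventually_at_rightI[of 0 1]) auto
  ultimately show "eventually (\<lambda>h. (V (x (t + h)) - V (x t)) / h \<le> 0 + \<epsilon>) (at_right 0)"
  proof eventually_elim
    case (elim h)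
    hence "norm (x (t + h)) \<le> \<eta> * h" using \<open>x t = 0\<close> by (simp add: sys_zero)
    moreover have "\<eta> * h \<le> 1" using \<open>\<eta> \<le> 1\<close> \<open>\<eta> > 0\<close> elim by (simp add: mult_le_one)
    ultimately have "V (x (t + h)) \<le> C * (\<eta> * h)"
      using V_le_norm[of "x (t + h)"] \<open>C > 0\<close> by (smt (verit) C_def mult_left_mono)
    also have "\<dots> \<le> \<epsilon> * h" using \<open>C * \<eta> \<le> \<epsilon>\<close> elim by (simp add: mult.assoc[symmetric])
    finally show ?case using elim \<open>x t = 0\<close> by (simp add: divide_le_eq)
  qed
qed

lemma phi1_inner_lower:
  assumes "0 < h" "0 < c" "norm y \<le> 2 * c * h" "c\<^sup>2 / 2 * h \<le> y \<bullet> w"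
  shows "c\<^sup>2 / 2 * (2 * c) powr (2 * \<beta>) * h powr (2 * \<beta>) * h \<le> \<phi>\<^sub>1 y \<bullet> w"
proof -
  have "0 < c\<^sup>2 / 2 * h" using assms(1,2) by simp
  hence "y \<bullet> w > 0" using assms(4) by linarith
  hence "y \<noteq> 0" by auto
  hence "y \<bullet> y > 0" by simp
  have "y \<bullet> y \<le> (2 * c * h)\<^sup>2"
    using power_mono[OF assms(3), of 2] by (simp add: power2_norm_eq_inner)
  hence "((2 * c * h)\<^sup>2) powr \<beta> \<le> (y \<bullet> y) powr \<beta>"
    using \<open>y \<bullet> y > 0\<close> \<beta>_neg by (intro powr_mono2') auto
  moreover have "((2 * c * h)\<^sup>2) powr \<beta> = (2 * c) powr (2 * \<beta>) * h powr (2 * \<beta>)"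
  proof -
    have "(2 * c * h)\<^sup>2 = (2 * c * h) powr 2" using assms(1,2) by (simp add: powr_realpow)
    hence "((2 * c * h)\<^sup>2) powr \<beta> = (2 * c * h) powr (2 * \<beta>)" by (simp only: powr_powr)
    thus ?thesis using assms(1,2) by (simp add: powr_mult)
  qed
  ultimately have "(2 * c) powr (2 * \<beta>) * h powr (2 * \<beta>) * (c\<^sup>2 / 2 * h) \<le> (y \<bullet> y) powr \<beta> * (y \<bullet> w)"
    using assms(1,4) by (intro mult_mono) auto
  also have "\<dots> \<le> (k3 + (y \<bullet> y) powr \<beta>) * (y \<bullet> w)"
    using \<open>y \<bullet> w > 0\<close> k3_pos by (intro mult_right_mono) auto
  finally show ?thesis by (simp add: phi1_eq algebra_simps)
qed

text \<open>On the hyperplane \<open>e\<^sub>1 = 0\<close> the function \<open>V\<close> is not differentiable: leaving it with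
  velocity \<open>e\<^sub>2 \<noteq> 0\<close>, the cross term \<open>- 2 \<phi>\<^sub>1 e\<^sub>1 \<bullet> e\<^sub>2\<close> decreases like \<open>h powr (1 + 2 \<beta>)\<close>,
  which beats every linear increase since \<open>2 \<beta> < 0\<close>.\<close>
lemma V_increment_le:
  fixes y w v :: "real^'n"
  defines "c \<equiv> norm v"
  defines "K \<equiv> c1 * (2 * k3\<^sup>2 + 3) * (2 * c) + c2 * (2 * c + 1)"
    and "L \<equiv> c\<^sup>2 * (2 * c) powr (2 * \<beta>)"
  assumes h: "0 < h" "h \<le> 1" "h \<le> c / 8" "2 * c * h \<le> 1"
    and y: "norm (y - h *\<^sub>R v) \<le> c / 4 * h" and w: "norm (w - v) \<le> h"
  shows "V (y, w) - V (0, v) \<le> h * (K - L * h powr (2 * \<beta>))"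
proof -
  have "c > 0" using h(1,3) by simp
  note near = inner_lower_bound_near_velocity[OF h(1), of v y w, folded c_def, OF h(3) y w]
  have "L / 2 * h powr (2 * \<beta>) * h \<le> \<phi>\<^sub>1 y \<bullet> w"
    using phi1_inner_lower[OF h(1) \<open>c > 0\<close> near] by (simp add: L_def)
  moreover have "\<phi>\<^sub>1 y \<bullet> \<phi>\<^sub>1 y \<le> (2 * k3\<^sup>2 + 3) * (2 * c * h)"
    using phi1_inner_plus_le[of y "2 * c * h" 0] near(1) h \<open>c > 0\<close> by simp
  moreover have "w \<bullet> w - v \<bullet> v \<le> h * (2 * c + 1)"
  proof -
    have "w \<bullet> w - v \<bullet> v = (w - v) \<bullet> (w + v)" by (simp add: algebra_simps inner_commute)
    also have "\<dots> \<le> norm (w - v) * norm (w + v)" by (rule Cauchy_Schwarz_ineq2[THEN abs_le_D1])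
    also have "\<dots> \<le> h * (2 * c + 1)"
    proof (rule mult_mono)
      have "norm (w + v) \<le> norm (w - v) + norm (2 *\<^sub>R v)"
        using norm_triangle_ineq[of "w - v" "2 *\<^sub>R v"] by (simp add: algebra_simps scaleR_2)
      thus "norm (w + v) \<le> 2 * c + 1" using h(2) w by (simp add: c_def)
    qed (use h w in auto)
    finally show ?thesis .
  qed
  ultimately have "c1 * (\<phi>\<^sub>1 y \<bullet> \<phi>\<^sub>1 y) - 2 * (\<phi>\<^sub>1 y \<bullet> w) + c2 * (w \<bullet> w - v \<bullet> v)
      \<le> c1 * ((2 * k3\<^sup>2 + 3) * (2 * c * h)) - 2 * (L / 2 * h powr (2 * \<beta>) * h)
         + c2 * (h * (2 * c + 1))"
    using c1_ge_2 c2_ge_2 by (intro add_mono diff_mono mult_left_mono) auto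
  moreover have "V (y, w) - V (0, v) = c1 * (\<phi>\<^sub>1 y \<bullet> \<phi>\<^sub>1 y) - 2 * (\<phi>\<^sub>1 y \<bullet> w) + c2 * (w \<bullet> w - v \<bullet> v)"
    by (simp add: V_def phi1_def algebra_simps)
  ultimately show ?thesis by (simp add: K_def algebra_simps)
qed

lemma upper_right_dini_V_e1_zero:
  assumes sol: "is_solution sys x" and "t \<ge> 0" and "fst (x t) = 0" and "snd (x t) \<noteq> 0"
  shows "upper_right_dini_le (\<lambda>\<tau>. V (x \<tau>)) t R"
  unfolding upper_right_dini_le_def
proof (intro allI impI)
  fix \<epsilon> :: real assume "\<epsilon> > 0"
  define w0 where "w0 = snd (x t)"
  define c where "c = norm w0"
  define K where "K = c1 * (2 * k3\<^sup>2 + 3) * (2 * c) + c2 * (2 * c + 1)"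
  define L where "L = c\<^sup>2 * (2 * c) powr (2 * \<beta>)"
  have "c > 0" using \<open>snd (x t) \<noteq> 0\<close> by (simp add: c_def w0_def)
  hence "L > 0" by (simp add: L_def)
  have "eventually (\<lambda>h. norm (fst (x (t + h)) - fst (x t) - h *\<^sub>R w0) \<le> c / 4 * h) (at_right 0)"
    using solution_has_derivative(1)[OF sol \<open>t \<ge> 0\<close>] \<open>fst (x t) = 0\<close> \<open>t \<ge> 0\<close> \<open>c > 0\<close>
    by (intro has_vector_derivative_imp_eventually_remainder[where S = "{0..}"])
       (auto simp: w0_def phi1_def)
  moreover have "eventually (\<lambda>h. norm (snd (x (t + h)) - w0 - h *\<^sub>R 0) \<le> 1 * h) (at_right 0)"
    unfolding w0_def using solution_has_derivative(2)[OF sol \<open>t \<ge> 0\<close>] \<open>fst (x t) = 0\<close> \<open>t \<ge> 0\<close>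
    by (intro has_vector_derivative_imp_eventually_remainder[where S = "{0..}"])
       (auto simp: phi2_def)
  moreover have "eventually (\<lambda>h. 0 < h \<and> h < min 1 (min (c / 8) (1 / (2 * c)))) (at_right 0)"
    using \<open>c > 0\<close> by (intro eventually_at_rightI[of 0 "min 1 (min (c / 8) (1 / (2 * c)))"]) auto
  moreover have "eventually (\<lambda>h. \<bar>K - R\<bar> / L \<le> h powr (2 * \<beta>)) (at_right 0)"
    using filterlim_powr_neg_at_right_0[of "2 * \<beta>"] \<beta>_neg by (simp add: filterlim_at_top)
  ultimately show "eventually (\<lambda>h. (V (x (t + h)) - V (x t)) / h \<le> R + \<epsilon>) (at_right 0)"
  proof eventually_elim
    case (elim h)
    hence "0 < h" "h < 1" "h < c / 8" "h < 1 / (2 * c)" by simp_all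
    hence h: "0 < h" "h \<le> 1" "h \<le> c / 8" "2 * c * h \<le> 1"
      using \<open>c > 0\<close> by (simp_all add: less_divide_eq mult.commute)
    have y: "norm (fst (x (t + h)) - h *\<^sub>R w0) \<le> c / 4 * h"
      and w: "norm (snd (x (t + h)) - w0) \<le> h" using elim(1,2) \<open>fst (x t) = 0\<close> by simp_all
    have "x (t + h) = (fst (x (t + h)), snd (x (t + h)))" "x t = (0, w0)"
      using \<open>fst (x t) = 0\<close> by (simp_all add: w0_def prod_eq_iff)
    hence "V (x (t + h)) - V (x t) \<le> h * (K - L * h powr (2 * \<beta>))"
      using V_increment_le[where v = w0, folded c_def, OF h y w] unfolding K_def L_def by simp
    also have "\<dots> \<le> h * R"
    proof -
      have "\<bar>K - R\<bar> \<le> L * h powr (2 * \<beta>)"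
        using elim(4) \<open>L > 0\<close> by (simp add: divide_le_eq mult.commute)
      thus ?thesis using h(1) by (intro mult_left_mono) auto
    qed
    finally have "(V (x (t + h)) - V (x t)) / h \<le> R"
      using h(1) by (simp add: divide_le_eq mult.commute)
    thus ?case using \<open>\<epsilon> > 0\<close> by simp
  qed
qed

lemma upper_right_dini_V:
  assumes sol: "is_solution sys x" and "t \<ge> 0"
  shows "upper_right_dini_le (\<lambda>\<tau>. V (x \<tau>)) t (- \<gamma>\<^sub>1 * V (x t) - \<gamma>\<^sub>2 * V (x t) powr (1 / p))"
proof (cases "fst (x t) = 0")
  case True
  show ?thesis
  proof (cases "snd (x t) = 0")
    case False
    with True show ?thesis by (intro upper_right_dini_V_e1_zero[OF sol \<open>t \<ge> 0\<close>])
  next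
    case False': True
    hence "x t = 0" using True by (simp add: prod_eq_iff)
    thus ?thesis using upper_right_dini_V_origin[OF sol \<open>t \<ge> 0\<close>] by simp
  qed
qed (rule upper_right_dini_V_e1_nonzero[OF sol \<open>t \<ge> 0\<close>])

context
  fixes x :: "real \<Rightarrow> (real^'n) \<times> (real^'n)"
  assumes sol: "is_solution sys x"
begin

lemma continuous_on_V_solution: "continuous_on {0..} (\<lambda>t. V (x t))"
proof -
  have "continuous_on {0..} x"
    using sol unfolding is_solution_def
    by (auto intro!: continuous_at_imp_continuous_on simp: continuous_on_eq_continuous_within
             intro: has_vector_derivative_continuous)
  thus ?thesis by (rule continuous_on_compose2[OF continuous_V]) auto
qed

lemma V_solution_antimono: "0 \<le> s \<Longrightarrow> s \<le> t \<Longrightarrow> V (x t) \<le> V (x s)"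
  by (rule finite_time_decay_antimono[OF \<gamma>\<^sub>1_pos \<gamma>\<^sub>2_pos inverse_p_bounds continuous_on_V_solution _
        upper_right_dini_V[OF sol]]) (simp_all add: V_nonneg)

lemma solution_settles:
  assumes "settling_time \<gamma>\<^sub>1 \<gamma>\<^sub>2 (1 / p) (V (x 0)) \<le> t"
  shows "x t = 0"
proof -
  have "V (x t) = 0"
    by (rule finite_time_decay_settles[OF \<gamma>\<^sub>1_pos \<gamma>\<^sub>2_pos inverse_p_bounds continuous_on_V_solution _
          upper_right_dini_V[OF sol] assms]) (simp add: V_nonneg)
  thus ?thesis using V_pos[of "x t"] by force
qed

end

lemma lyapunov_stable_sys: "lyapunov_stable sys"
  unfolding lyapunov_stable_def
proof (intro allI impI)
  fix \<epsilon> :: real assume "\<epsilon> > 0"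
  define m where "m = min (k3\<^sup>2) 1"
  have "m > 0" using k3_pos by (simp add: m_def)
  have "continuous_on UNIV (V :: (real^'n) \<times> (real^'n) \<Rightarrow> real)" by (rule continuous_V)
  hence "isCont V (0 :: (real^'n) \<times> (real^'n))"
    using continuous_on_eq_continuous_at[OF open_UNIV] by blast
  hence "\<forall>e>0. \<exists>d>0. \<forall>y :: (real^'n) \<times> (real^'n).
           dist y 0 < d \<longrightarrow> dist (V y) (V (0 :: (real^'n) \<times> (real^'n))) < e"
    by (simp only: continuous_at_eps_delta)
  moreover have "m * \<epsilon>\<^sup>2 > 0" using \<open>m > 0\<close> \<open>\<epsilon> > 0\<close> by simp
  ultimately obtain \<delta> where "\<delta> > 0"
    and \<delta>: "\<And>y :: (real^'n) \<times> (real^'n).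
                dist y 0 < \<delta> \<Longrightarrow> dist (V y) (V (0 :: (real^'n) \<times> (real^'n))) < m * \<epsilon>\<^sup>2"
    by blast
  show "\<exists>\<delta>>0. \<forall>x. is_solution sys x \<and> norm (x 0) < \<delta>
                  \<longrightarrow> (\<forall>t\<ge>0. norm (x t :: (real^'n) \<times> (real^'n)) < \<epsilon>)"
  proof (intro exI[of _ \<delta>] conjI allI impI \<open>\<delta> > 0\<close>)
    fix x :: "real \<Rightarrow> (real^'n) \<times> (real^'n)" and t :: real
    assume x: "is_solution sys x \<and> norm (x 0) < \<delta>" and "0 \<le> t"
    have "m * (norm (x t))\<^sup>2 \<le> V (x t)" unfolding m_def by (rule V_ge_norm)
    also have "\<dots> \<le> V (x 0)" using V_solution_antimono[of x 0 t] x \<open>0 \<le> t\<close> by simp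
    also have "\<dots> < m * \<epsilon>\<^sup>2" using \<delta>[of "x 0"] x V_nonneg[of "x 0"] by (simp add: dist_norm)
    finally have "(norm (x t))\<^sup>2 < \<epsilon>\<^sup>2" using \<open>m > 0\<close> by simp
    thus "norm (x t) < \<epsilon>" by (rule power_less_imp_less_base) (use \<open>\<epsilon> > 0\<close> in simp)
  qed
qed

lemma ffts_sys: "ffts (sys :: (real^'n) \<times> (real^'n) \<Rightarrow> (real^'n) \<times> (real^'n))"
  unfolding ffts_def
proof (intro conjI sys_zero lyapunov_stable_sys, rule exI[of _ 1], rule conjI[OF zero_less_one],
    rule exI[of _ V], rule exI[of _ "\<gamma>\<^sub>1"], rule exI[of _ "\<gamma>\<^sub>2"], rule exI[of _ "1 / p"],
    intro conjI \<gamma>\<^sub>1_pos \<gamma>\<^sub>2_pos inverse_p_bounds V_zero ballI impI allI)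
  show "continuous_on (ball 0 1) (V :: (real^'n) \<times> (real^'n) \<Rightarrow> real)"
    using continuous_V by (rule continuous_on_subset) simp
  show "V z > 0" if "z \<noteq> 0" for z :: "(real^'n) \<times> (real^'n)" using V_pos[OF that] .
next
  fix x :: "real \<Rightarrow> (real^'n) \<times> (real^'n)" and t \<epsilon> :: real
  assume "is_solution sys x \<and> x 0 \<in> ball 0 1" and "0 \<le> t" and "0 < \<epsilon>"
  thus "eventually (\<lambda>h. (V (x (t + h)) - V (x t)) / h
          \<le> - \<gamma>\<^sub>1 * V (x t) - \<gamma>\<^sub>2 * V (x t) powr (1 / p) + \<epsilon>) (at_right 0)"
    using upper_right_dini_V unfolding upper_right_dini_le_def by blast
next
  fix x :: "real \<Rightarrow> (real^'n) \<times> (real^'n)"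
  assume "is_solution sys x \<and> x 0 \<in> ball 0 1"
  thus "\<exists>T\<ge>0. T \<le> 1 / (\<gamma>\<^sub>1 * (1 - 1 / p)) * ln ((\<gamma>\<^sub>1 * V (x 0) powr (1 - 1 / p) + \<gamma>\<^sub>2) / \<gamma>\<^sub>2)
               \<and> (\<forall>t\<ge>T. x t = 0)"
    using settling_time_nonneg[OF \<gamma>\<^sub>1_pos \<gamma>\<^sub>2_pos inverse_p_bounds V_nonneg[of "x 0"]]
      solution_settles
    by (intro exI[of _ "settling_time \<gamma>\<^sub>1 \<gamma>\<^sub>2 (1 / p) (V (x 0))"]) (auto simp: settling_time_def)
qed

end

theorem theorem1:
  fixes p k1 k2 k3 :: real
  assumes "1 < p" and "p < 2" and "k3 > 0" and "k1 > 0" and "k2 > 0"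
    and "hurwitz (vector [vector [- k1, 1], vector [- k2, 0]] :: real^2^2)"
  shows "ffts (err_sys p k1 k2 k3 :: (real^'n) \<times> (real^'n) \<Rightarrow> (real^'n) \<times> (real^'n))"
proof -
  interpret err_sys_gains p k1 k2 k3 using assms by unfold_locales
  show ?thesis by (rule ffts_sys)
qed

end
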